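(* For all integers $n\geqslant 1$ and $d\geqslant 2$, \[ f(n,d)\leqslant n+\log_2 n\cdot f(n,d-1). \]
   Context: A box in $\mathbb R^d$ is a set of the form $[a_1,b_1]\times\cdots\times[a_d,b_d]$ (edges parallel to the coordinate axes). For a family $\mathscr B$ of boxes, $\nu(\mathscr B)$ is the maximal number of pairwise disjoint members of $\mathscr B$, and $\tau(\mathscr B)$ is the minimal number of points in a set meeting every member of $\mathscr B$. For integers $n\geqslant 1$, $d\geqslant 1$, $f(n,d)$ denotes the supremum of $\tau(\mathscr B)$ over all families $\mathscr B$ of boxes in $\mathbb R^d$ with $\nu(\mathscr B)=n$; by convention $f(0,d)=0$. The statement presupposes that these quantities are finite. *)

theory Defs
  imports "HOL-Analysis.Analysis" "HOL-Library.Extended_Real" "HOL-Library.Disjoint_Sets"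
begin

text \<open>Points of R^d are represented as functions nat => real that vanish at all
  coordinates i >= d (so that the dimension d can vary inside one statement).\<close>

definition box :: "nat \<Rightarrow> (nat \<Rightarrow> real) \<Rightarrow> (nat \<Rightarrow> real) \<Rightarrow> (nat \<Rightarrow> real) set" where
  "box d a b = {x. (\<forall>i<d. a i \<le> x i \<and> x i \<le> b i) \<and> (\<forall>i\<ge>d. x i = 0)}"

definition is_box :: "nat \<Rightarrow> (nat \<Rightarrow> real) set \<Rightarrow> bool" where
  "is_box d B \<longleftrightarrow> (\<exists>a b. (\<forall>i<d. a i \<le> b i) \<and> B = box d a b)"

definition nu :: "(nat \<Rightarrow> real) set set \<Rightarrow> enat" where
  "nu F = Sup {enat (card S) | S. S \<subseteq> F \<and> finite S \<and> disjoint S}"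

definition tau :: "(nat \<Rightarrow> real) set set \<Rightarrow> enat" where
  "tau F = Inf {enat (card P) | P. finite P \<and> (\<forall>B\<in>F. P \<inter> B \<noteq> {})}"

definition f_box :: "nat \<Rightarrow> nat \<Rightarrow> ereal" where
  "f_box n d = Sup {ereal_of_enat (tau F) | F. (\<forall>B\<in>F. is_box d B) \<and> nu F = enat n}"

end

theory Submission
  imports Defs
begin

text \<open>Let \<open>\<nu>(F) \<le> m\<close> and \<open>h = \<lfloor>m/2\<rfloor>\<close>. Since the boxes lying entirely to the left and
  entirely to the right of a hyperplane \<open>x\<^sub>d = c\<close> are separated, their disjoint subfamilies
  combine, and as \<open>\<nu>(F) \<le> 2h + 1\<close> a suitable \<open>c\<close> leaves at most \<open>h\<close> disjoint boxes on each
  side. The boxes crossing the hyperplane are pierced by any piercing set of their projections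
  onto it, lifted to the hyperplane, so they need at most \<open>f(m, d - 1)\<close> points. By induction on
  \<open>m\<close> this gives \<open>\<tau>(F) \<le> 2(h + log\<^sub>2 h \<cdot> f(h, d - 1)) + f(m, d - 1)\<close>, and the bound
  \<open>m + log\<^sub>2 m \<cdot> f(m, d - 1)\<close> follows from \<open>2 f(h, d - 1) \<le> f(m, d - 1)\<close>: \<open>f\<close> is superadditive
  in \<open>n\<close>, because squeezing two families by \<open>arctan\<close> into disjoint slabs adds both \<open>\<nu>\<close>
  and \<open>\<tau>\<close>. The case \<open>m = 1\<close> is Helly's theorem for boxes.\<close>

section \<open>Packing and piercing numbers\<close>

lemma nu_le_iff:
  "nu F \<le> enat k \<longleftrightarrow> (\<forall>S. S \<subseteq> F \<and> finite S \<and> disjoint S \<longrightarrow> card S \<le> k)"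
  unfolding nu_def Sup_le_iff by (auto 0 3)

lemma card_le_of_nu_le:
  "nu F \<le> enat k \<Longrightarrow> S \<subseteq> F \<Longrightarrow> finite S \<Longrightarrow> disjoint S \<Longrightarrow> card S \<le> k"
  by (simp add: nu_le_iff)

lemma nu_upper: "S \<subseteq> F \<Longrightarrow> finite S \<Longrightarrow> disjoint S \<Longrightarrow> enat (card S) \<le> nu F"
  unfolding nu_def by (rule Sup_upper) auto

lemma nu_mono: "G \<subseteq> F \<Longrightarrow> nu G \<le> nu F"
  unfolding nu_def by (rule Sup_subset_mono) blast

lemma nu_attained:
  assumes "nu F = enat k"
  obtains S where "S \<subseteq> F" "finite S" "disjoint S" "card S = k"
proof -
  let ?X = "{enat (card S) | S. S \<subseteq> F \<and> finite S \<and> disjoint S}"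
  have ne: "?X \<noteq> {}" by (auto intro!: exI[of _ "{}"])
  have "Sup ?X = enat k" using assms unfolding nu_def .
  then have fin: "finite ?X" and "Max ?X = enat k"
    using ne unfolding Sup_enat_def by (auto split: if_splits)
  then have "enat k \<in> ?X" using Max_in[OF fin ne] by simp
  then show thesis using that by auto
qed

lemma nu_finite_disjoint: "finite E \<Longrightarrow> disjoint E \<Longrightarrow> nu E = enat (card E)"
  by (intro antisym nu_upper) (auto simp: nu_le_iff intro: card_mono)

lemma tau_upper: "finite P \<Longrightarrow> (\<And>B. B \<in> F \<Longrightarrow> P \<inter> B \<noteq> {}) \<Longrightarrow> tau F \<le> enat (card P)"
  unfolding tau_def by (rule Inf_lower) auto

lemma tau_greatest:
  "(\<And>P. finite P \<Longrightarrow> (\<forall>B\<in>F. P \<inter> B \<noteq> {}) \<Longrightarrow> x \<le> enat (card P)) \<Longrightarrow> x \<le> tau F"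
  unfolding tau_def by (rule Inf_greatest) auto

lemma tau_attained:
  assumes "tau F = enat k"
  obtains P where "finite P" "\<forall>B\<in>F. P \<inter> B \<noteq> {}" "card P = k"
proof -
  let ?X = "{enat (card P) | P. finite P \<and> (\<forall>B\<in>F. P \<inter> B \<noteq> {})}"
  have X: "Inf ?X = enat k" using assms unfolding tau_def .
  have ne: "?X \<noteq> {}"
  proof
    assume "?X = {}"
    then have "Inf ?X = \<infinity>" by (simp only: Inf_empty top_enat_def)
    with X show False by simp
  qed
  then obtain y where "y \<in> ?X" by blast
  then have "(LEAST x. x \<in> ?X) \<in> ?X" by (rule LeastI)
  then have "Inf ?X \<in> ?X" using ne unfolding Inf_enat_def by simp
  then have "enat k \<in> ?X" using X by simp
  then show thesis using that by auto
qed

lemma tau_Un_le: "tau (F \<union> G) \<le> tau F + tau G"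
proof (cases "tau F = \<infinity> \<or> tau G = \<infinity>")
  case False
  then obtain a b where ab: "tau F = enat a" "tau G = enat b" by auto
  obtain P where P: "finite P" "\<forall>B\<in>F. P \<inter> B \<noteq> {}" "card P = a"
    using tau_attained[OF ab(1)] .
  obtain Q where Q: "finite Q" "\<forall>B\<in>G. Q \<inter> B \<noteq> {}" "card Q = b"
    using tau_attained[OF ab(2)] .
  have "tau (F \<union> G) \<le> enat (card (P \<union> Q))"
    by (rule tau_upper) (use P(1,2) Q(1,2) in auto)
  also have "\<dots> \<le> enat (a + b)" using card_Un_le[of P Q] P Q by simp
  finally show ?thesis using ab by simp
qed auto

lemma nu_image_le: "nu ((`) \<phi> ` F) \<le> nu F"
  unfolding nu_def[of "(`) \<phi> ` F"]
proof (rule Sup_least, clarify)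
  fix S assume S: "S \<subseteq> (`) \<phi> ` F" "finite S" "disjoint S"
  then obtain U where U: "U \<subseteq> F" "inj_on ((`) \<phi>) U" "S = (`) \<phi> ` U"
    by (meson subset_image_inj)
  have "disjoint U"
  proof (rule disjointI)
    fix A B assume "A \<in> U" "B \<in> U" "A \<noteq> B"
    then have "\<phi> ` A \<noteq> \<phi> ` B" using U(2) by (meson inj_onD)
    then have "\<phi> ` A \<inter> \<phi> ` B = {}"
      using S(3) U(3) \<open>A \<in> U\<close> \<open>B \<in> U\<close> by (intro disjointD[of S]) auto
    then show "A \<inter> B = {}" by auto
  qed
  moreover have "finite U" using S U finite_image_iff by blast
  ultimately have "enat (card U) \<le> nu F" using U(1) by (intro nu_upper)
  then show "enat (card S) \<le> nu F" using U by (simp add: card_image)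
qed

lemma tau_image_le: "tau ((`) \<phi> ` F) \<le> tau F"
proof (rule tau_greatest)
  fix P assume P: "finite P" "\<forall>B\<in>F. P \<inter> B \<noteq> {}"
  have "tau ((`) \<phi> ` F) \<le> enat (card (\<phi> ` P))"
    using P by (intro tau_upper) blast+
  also have "\<dots> \<le> enat (card P)" using card_image_le[OF P(1)] by simp
  finally show "tau ((`) \<phi> ` F) \<le> enat (card P)" .
qed

lemma tau_le_tau_image:
  assumes "\<And>B x. B \<in> F \<Longrightarrow> x \<in> B \<Longrightarrow> g (\<phi> x) \<in> B"
  shows "tau F \<le> tau ((`) \<phi> ` F)"
proof (rule tau_greatest)
  fix Q assume Q: "finite Q" "\<forall>B\<in>(`) \<phi> ` F. Q \<inter> B \<noteq> {}"
  have "tau F \<le> enat (card (g ` Q))"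
  proof (rule tau_upper)
    fix B assume "B \<in> F"
    then obtain x where "x \<in> B" "\<phi> x \<in> Q" using Q(2) by blast
    then show "g ` Q \<inter> B \<noteq> {}" using assms \<open>B \<in> F\<close> by blast
  qed (use Q in simp)
  also have "\<dots> \<le> enat (card Q)" using card_image_le[OF Q(1)] by simp
  finally show "tau F \<le> enat (card Q)" .
qed

lemma
  assumes "inj \<phi>"
  shows nu_image_inj: "nu ((`) \<phi> ` F) = nu F"
    and tau_image_inj: "tau ((`) \<phi> ` F) = tau F"
proof -
  have "(`) (inv \<phi>) ` (`) \<phi> ` F = F" using assms by (simp add: image_image)
  then show "nu ((`) \<phi> ` F) = nu F" using nu_image_le[of \<phi> F] nu_image_le[of "inv \<phi>" "(`) \<phi> ` F"]
    by (intro antisym) auto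
  show "tau ((`) \<phi> ` F) = tau F"
    using assms by (intro antisym tau_image_le tau_le_tau_image[where g = "inv \<phi>"]) simp
qed

section \<open>Boxes and Helly's theorem\<close>

lemma box_nonempty: "is_box d B \<Longrightarrow> B \<noteq> {}"
proof -
  assume "is_box d B"
  then obtain a b where ab: "\<forall>i<d. a i \<le> b i" "B = box d a b" unfolding is_box_def by blast
  then have "(\<lambda>i. if i < d then a i else 0) \<in> B" unfolding box_def by auto
  then show ?thesis by blast
qed

lemma is_box_singleton:
  assumes "\<And>i. d \<le> i \<Longrightarrow> x i = 0"
  shows "is_box d {x}"
proof -
  have "box d x x = {x}"
    using assms by (auto simp: box_def fun_eq_iff) (metis order_antisym not_le)
  then show ?thesis unfolding is_box_def by blast
qed

definition box_lo :: "nat \<Rightarrow> (nat \<Rightarrow> real) set \<Rightarrow> real" where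
  "box_lo i B = Inf ((\<lambda>x. x i) ` B)"

definition box_hi :: "nat \<Rightarrow> (nat \<Rightarrow> real) set \<Rightarrow> real" where
  "box_hi i B = Sup ((\<lambda>x. x i) ` B)"

lemma coordinate_image_box:
  assumes "i < d" "\<forall>j<d. a j \<le> b j"
  shows "(\<lambda>x. x i) ` box d a b = {a i..b i}"
proof (intro set_eqI iffI)
  fix s assume s: "s \<in> {a i..b i}"
  have "(\<lambda>j. if j < d then (if j = i then s else a j) else 0) \<in> box d a b"
    using s assms unfolding box_def by auto
  then show "s \<in> (\<lambda>x. x i) ` box d a b" by (rule rev_image_eqI) (use assms(1) in simp)
qed (use assms(1) in \<open>auto simp: box_def\<close>)

lemma box_eq_box_lo_hi:
  assumes "is_box d B"
  shows "B = box d (\<lambda>i. box_lo i B) (\<lambda>i. box_hi i B)"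
proof -
  obtain a b where ab: "\<forall>i<d. a i \<le> b i" "B = box d a b"
    using assms unfolding is_box_def by blast
  then have "box_lo i B = a i" "box_hi i B = b i" if "i < d" for i
    using coordinate_image_box[OF that ab(1)] that unfolding box_lo_def box_hi_def by auto
  then show ?thesis using ab(2) unfolding box_def by auto
qed

lemma mem_box_iff:
  "is_box d B \<Longrightarrow> x \<in> B \<longleftrightarrow> (\<forall>i<d. box_lo i B \<le> x i \<and> x i \<le> box_hi i B) \<and> (\<forall>i\<ge>d. x i = 0)"
  by (subst (1) box_eq_box_lo_hi) (auto simp: box_def)

lemma box_lo_le_coordinate: "is_box d B \<Longrightarrow> x \<in> B \<Longrightarrow> i < d \<Longrightarrow> box_lo i B \<le> x i"
  and coordinate_le_box_hi: "is_box d B \<Longrightarrow> x \<in> B \<Longrightarrow> i < d \<Longrightarrow> x i \<le> box_hi i B"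
  by (simp_all add: mem_box_iff)

lemma helly_boxes:
  assumes boxes: "\<forall>B\<in>F. is_box d B" and meet: "\<forall>A\<in>F. \<forall>B\<in>F. A \<inter> B \<noteq> {}" and "F \<noteq> {}"
  obtains x where "\<forall>B\<in>F. x \<in> B"
proof -
  have lo_le_hi: "box_lo i A \<le> box_hi i B" if "A \<in> F" "B \<in> F" "i < d" for A B i
  proof -
    from meet that have "A \<inter> B \<noteq> {}" by simp
    then obtain x where "x \<in> A" "x \<in> B" by blast
    have "box_lo i A \<le> x i" by (rule box_lo_le_coordinate) (use boxes that \<open>x \<in> A\<close> in auto)
    also have "x i \<le> box_hi i B" by (rule coordinate_le_box_hi) (use boxes that \<open>x \<in> B\<close> in auto)
    finally show ?thesis .
  qed
  define x where "x i = (if i < d then Sup ((\<lambda>B. box_lo i B) ` F) else 0)" for i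
  have "x \<in> B" if "B \<in> F" for B
    unfolding mem_box_iff[OF boxes[rule_format, OF that]]
  proof (intro conjI allI impI)
    fix i assume "i < d"
    have "bdd_above ((\<lambda>B. box_lo i B) ` F)"
      using lo_le_hi[OF _ that \<open>i < d\<close>] by (intro bdd_aboveI2)
    then show "box_lo i B \<le> x i"
      unfolding x_def using \<open>i < d\<close> that by (simp add: cSUP_upper)
    show "x i \<le> box_hi i B"
      unfolding x_def using \<open>i < d\<close> \<open>F \<noteq> {}\<close> lo_le_hi[OF _ that] by (simp add: cSUP_least)
  qed (simp add: x_def)
  then show thesis using that by blast
qed

lemma tau_le_1_if_nu_le_1:
  assumes boxes: "\<forall>B\<in>F. is_box d B" and "nu F \<le> enat 1"
  shows "tau F \<le> enat 1"
proof (cases "F = {}")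
  case True
  then have "tau F \<le> enat 0" using tau_upper[of "{}" F] by simp
  then show ?thesis by (metis zero_le_one order_trans enat_ord_simps(1))
next
  case False
  have "A \<inter> B \<noteq> {}" if "A \<in> F" "B \<in> F" for A B
  proof
    assume "A \<inter> B = {}"
    then have "disjoint {A, B}" by (auto simp: disjoint_def)
    then have "card {A, B} \<le> 1" using \<open>nu F \<le> enat 1\<close> that by (intro card_le_of_nu_le) auto
    then have "A = B" by (cases "A = B") auto
    then show False using \<open>A \<inter> B = {}\<close> box_nonempty boxes that by blast
  qed
  then obtain x where "\<forall>B\<in>F. x \<in> B" using helly_boxes[OF boxes _ False] by blast
  then show ?thesis using tau_upper[of "{x}" F] by auto
qed

section \<open>Superadditivity of \<open>f_box\<close>\<close>

lemma tau_Un_separated: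
  assumes "\<forall>B\<in>F1. B \<subseteq> S1" "\<forall>B\<in>F2. B \<subseteq> S2" "S1 \<inter> S2 = {}"
  shows "tau F1 + tau F2 \<le> tau (F1 \<union> F2)"
proof (rule tau_greatest)
  fix Q assume Q: "finite Q" "\<forall>B\<in>F1 \<union> F2. Q \<inter> B \<noteq> {}"
  have restrict: "tau F \<le> enat (card (Q \<inter> S))" if "F \<subseteq> F1 \<union> F2" "\<forall>B\<in>F. B \<subseteq> S" for F S
  proof (rule tau_upper)
    fix B assume "B \<in> F"
    then have "Q \<inter> B \<noteq> {}" "B \<subseteq> S" using Q(2) that by auto
    then show "Q \<inter> S \<inter> B \<noteq> {}" by blast
  qed (use Q(1) in simp)
  have "tau F1 + tau F2 \<le> enat (card (Q \<inter> S1)) + enat (card (Q \<inter> S2))"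
    using assms(1,2) by (intro add_mono restrict) auto
  also have "\<dots> = enat (card ((Q \<inter> S1) \<union> (Q \<inter> S2)))"
    using Q(1) assms(3) by (subst card_Un_disjoint) auto
  also have "\<dots> \<le> enat (card Q)" using Q(1) by (simp add: card_mono)
  finally show "tau F1 + tau F2 \<le> enat (card Q)" .
qed

lemma nu_Un_separated:
  assumes F1: "\<forall>B\<in>F1. B \<noteq> {} \<and> B \<subseteq> S1" and F2: "\<forall>B\<in>F2. B \<noteq> {} \<and> B \<subseteq> S2"
    and "S1 \<inter> S2 = {}" and "nu F1 = enat a" "nu F2 = enat b"
  shows "nu (F1 \<union> F2) = enat (a + b)"
proof (rule antisym)
  show "nu (F1 \<union> F2) \<le> enat (a + b)"
    unfolding nu_le_iff
  proof (intro allI impI)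
    fix S assume S: "S \<subseteq> F1 \<union> F2 \<and> finite S \<and> disjoint S"
    have "card (S \<inter> F1) \<le> a"
      by (rule card_le_of_nu_le[of F1]) (use S assms(4) in \<open>auto intro: pairwise_subset\<close>)
    moreover have "card (S \<inter> F2) \<le> b"
      by (rule card_le_of_nu_le[of F2]) (use S assms(5) in \<open>auto intro: pairwise_subset\<close>)
    moreover have "card S \<le> card (S \<inter> F1) + card (S \<inter> F2)"
    proof -
      have "S = (S \<inter> F1) \<union> (S \<inter> F2)" using S by blast
      then show ?thesis by (metis card_Un_le)
    qed
    ultimately show "card S \<le> a + b" by simp
  qed
  obtain T1 where T1: "T1 \<subseteq> F1" "finite T1" "disjoint T1" "card T1 = a"
    using nu_attained[OF assms(4)] .
  obtain T2 where T2: "T2 \<subseteq> F2" "finite T2" "disjoint T2" "card T2 = b"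
    using nu_attained[OF assms(5)] .
  have "\<Union>T1 \<subseteq> S1" "\<Union>T2 \<subseteq> S2" using T1(1) T2(1) F1 F2 by auto
  then have "\<Union>T1 \<inter> \<Union>T2 = {}" using \<open>S1 \<inter> S2 = {}\<close> by auto
  moreover have "T1 \<inter> T2 = {}"
  proof (rule ccontr)
    assume "T1 \<inter> T2 \<noteq> {}"
    then obtain B where "B \<in> T1" "B \<in> T2" by auto
    moreover have "B \<noteq> {}" using \<open>B \<in> T1\<close> T1(1) F1 by auto
    ultimately show False using \<open>\<Union>T1 \<inter> \<Union>T2 = {}\<close> by auto
  qed
  ultimately have "card (T1 \<union> T2) = a + b" "disjoint (T1 \<union> T2)"
    using T1 T2 by (simp_all add: card_Un_disjoint disjoint_union)
  then show "enat (a + b) \<le> nu (F1 \<union> F2)"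
    using T1 T2 nu_upper[of "T1 \<union> T2" "F1 \<union> F2"] by auto
qed

definition squeeze :: "real \<Rightarrow> (nat \<Rightarrow> real) \<Rightarrow> (nat \<Rightarrow> real)" where
  "squeeze t x = x(0 := t + arctan (x 0))"

lemma inj_squeeze: "inj (squeeze t)"
proof (rule injI)
  fix x y assume eq: "squeeze t x = squeeze t y"
  then have "x 0 = y 0" unfolding squeeze_def by (metis arctan_eq_iff add_left_cancel fun_upd_same)
  moreover have "x i = y i" if "i \<noteq> 0" for i
    using eq that unfolding squeeze_def by (metis fun_upd_other)
  ultimately show "x = y" by (metis ext)
qed

lemma squeeze_coordinate_bounds: "t - pi/2 < squeeze t x 0" "squeeze t x 0 < t + pi/2"
  unfolding squeeze_def using arctan_bounded[of "x 0"] by auto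

lemma squeeze_image_box:
  assumes "0 < d" "\<forall>i<d. a i \<le> b i"
  shows "squeeze t ` box d a b = box d (squeeze t a) (squeeze t b)"
proof (intro set_eqI iffI)
  fix y assume "y \<in> squeeze t ` box d a b"
  then obtain x where "x \<in> box d a b" "y = squeeze t x" by blast
  then show "y \<in> box d (squeeze t a) (squeeze t b)"
    using assms(1) unfolding box_def squeeze_def by (auto simp: arctan_le_iff)
next
  fix y assume y: "y \<in> box d (squeeze t a) (squeeze t b)"
  then have y0: "t + arctan (a 0) \<le> y 0" "y 0 \<le> t + arctan (b 0)"
    using assms(1) unfolding box_def squeeze_def by auto
  then have y0_eq: "arctan (tan (y 0 - t)) = y 0 - t"
    using arctan_bounded[of "a 0"] arctan_bounded[of "b 0"] by (intro arctan_tan) auto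
  define x where "x = y(0 := tan (y 0 - t))"
  have "arctan (a 0) \<le> arctan (x 0)" "arctan (x 0) \<le> arctan (b 0)"
    using y0 y0_eq unfolding x_def by auto
  then have "a 0 \<le> x 0" "x 0 \<le> b 0" by (simp_all add: arctan_le_iff)
  then have "x \<in> box d a b" using y assms(1) unfolding box_def x_def squeeze_def by auto
  moreover have "squeeze t x = y"
    unfolding squeeze_def x_def using y0_eq by (auto simp: fun_eq_iff)
  ultimately show "y \<in> squeeze t ` box d a b" by blast
qed

lemma is_box_squeeze_image:
  assumes "0 < d" "is_box d B"
  shows "is_box d (squeeze t ` B)"
proof -
  obtain a b where ab: "\<forall>i<d. a i \<le> b i" "B = box d a b" using assms(2) unfolding is_box_def by blast
  then have "\<forall>i<d. squeeze t a i \<le> squeeze t b i"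
    using assms(1) by (auto simp: squeeze_def arctan_le_iff)
  then show ?thesis unfolding is_box_def using squeeze_image_box[OF assms(1) ab(1)] ab(2) by blast
qed

lemma exists_box_family_nu:
  assumes "0 < e"
  obtains F :: "(nat \<Rightarrow> real) set set" where "\<forall>B\<in>F. is_box e B" "nu F = enat j"
proof -
  define p where "p i = (\<lambda>k::nat. if k = 0 then real i else (0::real))" for i :: nat
  define F where "F = (\<lambda>i. {p i}) ` {..<j}"
  have "inj p" unfolding p_def inj_def by (metis of_nat_eq_iff)
  then have "card F = j" unfolding F_def by (simp add: card_image inj_on_def)
  moreover have "disjoint F" unfolding F_def disjoint_def by auto
  ultimately have "nu F = enat j" unfolding F_def by (simp add: nu_finite_disjoint)
  moreover have "\<forall>B\<in>F. is_box e B"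
    unfolding F_def p_def using assms by (auto intro!: is_box_singleton)
  ultimately show thesis using that by blast
qed

lemma f_box_eq_SUP:
  "f_box n e = (SUP F\<in>{F. (\<forall>B\<in>F. is_box e B) \<and> nu F = enat n}. ereal_of_enat (tau F))"
  unfolding f_box_def by (simp add: setcompr_eq_image)

lemma tau_le_f_box: "\<forall>B\<in>F. is_box e B \<Longrightarrow> nu F = enat n \<Longrightarrow> ereal_of_enat (tau F) \<le> f_box n e"
  unfolding f_box_eq_SUP by (rule SUP_upper) auto

lemma f_box_nonneg:
  assumes "0 < e"
  shows "0 \<le> f_box n e"
proof -
  obtain F where "\<forall>B\<in>F. is_box e B" "nu F = enat n" using exists_box_family_nu[OF assms] .
  then have "ereal_of_enat (tau F) \<le> f_box n e" by (rule tau_le_f_box)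
  then show ?thesis by (rule order_trans[OF ereal_of_enat_nonneg])
qed

lemma tau_add_tau_le_f_box:
  assumes "0 < e"
    and F1: "\<forall>B\<in>F1. is_box e B" "nu F1 = enat a" and F2: "\<forall>B\<in>F2. is_box e B" "nu F2 = enat b"
  shows "ereal_of_enat (tau F1) + ereal_of_enat (tau F2) \<le> f_box (a + b) e"
proof -
  define G1 where "G1 = (`) (squeeze 0) ` F1"
  define G2 where "G2 = (`) (squeeze 4) ` F2"
  have "squeeze 0 x 0 < 2" "2 < squeeze 4 x 0" for x
    using squeeze_coordinate_bounds[of 0 x] squeeze_coordinate_bounds[of 4 x] pi_less_4 by simp_all
  then have G1: "\<forall>B\<in>G1. B \<noteq> {} \<and> B \<subseteq> {x. x 0 < 2}"
    and G2: "\<forall>B\<in>G2. B \<noteq> {} \<and> B \<subseteq> {x. 2 < x 0}"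
    unfolding G1_def G2_def using F1(1) F2(1) box_nonempty[of e] by auto
  have "ereal_of_enat (tau F1) + ereal_of_enat (tau F2) = ereal_of_enat (tau G1 + tau G2)"
    unfolding G1_def G2_def by (simp add: tau_image_inj[OF inj_squeeze] ereal_of_enat_add)
  also have "\<dots> \<le> ereal_of_enat (tau (G1 \<union> G2))"
    unfolding ereal_of_enat_le_iff
    by (rule tau_Un_separated[of G1 "{x. x 0 < 2}" G2 "{x. 2 < x 0}"]) (use G1 G2 in auto)
  also have "\<dots> \<le> f_box (a + b) e"
  proof (rule tau_le_f_box)
    show "\<forall>B\<in>G1 \<union> G2. is_box e B"
      unfolding G1_def G2_def using F1(1) F2(1) is_box_squeeze_image[OF \<open>0 < e\<close>] by auto
    have "nu G1 = enat a" "nu G2 = enat b"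
      unfolding G1_def G2_def using F1(2) F2(2) by (simp_all add: nu_image_inj[OF inj_squeeze])
    with G1 G2 show "nu (G1 \<union> G2) = enat (a + b)"
      by (intro nu_Un_separated[of G1 "{x. x 0 < 2}" G2 "{x. 2 < x 0}"]) auto
  qed
  finally show ?thesis .
qed

lemma f_box_superadditive:
  assumes "0 < e"
  shows "f_box a e + f_box b e \<le> f_box (a + b) e"
proof -
  let ?Fam = "\<lambda>n. {F. (\<forall>B\<in>F. is_box e B) \<and> nu F = enat n}"
  let ?t = "\<lambda>F. ereal_of_enat (tau F)"
  have ne: "?Fam n \<noteq> {}" for n using exists_box_family_nu[OF assms] by blast
  have "f_box a e + f_box b e = (SUP F1\<in>?Fam a. ?t F1 + f_box b e)"
    unfolding f_box_eq_SUP[of a e]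
    by (rule SUP_ereal_add_left[symmetric, OF ne]) (use f_box_nonneg[OF assms, of b] in auto)
  also have "\<dots> = (SUP F1\<in>?Fam a. SUP F2\<in>?Fam b. ?t F1 + ?t F2)"
    unfolding f_box_eq_SUP[of b e] by (simp add: SUP_ereal_add_right[OF ne])
  also have "\<dots> \<le> f_box (a + b) e"
    by (intro SUP_least) (auto intro: tau_add_tau_le_f_box[OF assms])
  finally show ?thesis .
qed

lemma f_box_mono:
  assumes "0 < e" "j \<le> m"
  shows "f_box j e \<le> f_box m e"
proof -
  have "f_box j e = f_box j e + 0" by simp
  also have "\<dots> \<le> f_box j e + f_box (m - j) e" by (intro add_left_mono f_box_nonneg[OF assms(1)])
  also have "\<dots> \<le> f_box m e" using f_box_superadditive[OF assms(1), of j "m - j"] assms(2) by simp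
  finally show ?thesis .
qed

lemma tau_le_f_box_of_nu_le:
  assumes "0 < e" "\<forall>B\<in>F. is_box e B" "nu F \<le> enat m"
  shows "ereal_of_enat (tau F) \<le> f_box m e"
proof -
  obtain j where j: "nu F = enat j" using assms(3) enat_ile by blast
  then have "ereal_of_enat (tau F) \<le> f_box j e" by (rule tau_le_f_box[OF assms(2)])
  also have "\<dots> \<le> f_box m e" using assms(3) j by (intro f_box_mono[OF assms(1)]) simp
  finally show ?thesis .
qed

lemma f_box_double_le:
  assumes "0 < e" "2 * h \<le> m"
  shows "f_box h e + f_box h e \<le> f_box m e"
proof -
  have "f_box h e + f_box h e \<le> f_box (h + h) e" by (rule f_box_superadditive[OF assms(1)])
  also have "\<dots> \<le> f_box m e" using assms(2) by (intro f_box_mono[OF assms(1)]) simp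
  finally show ?thesis .
qed

section \<open>Cutting a family by a hyperplane\<close>

definition drop_coordinate :: "nat \<Rightarrow> (nat \<Rightarrow> real) \<Rightarrow> (nat \<Rightarrow> real)" where
  "drop_coordinate k x = x(k := 0)"

lemma drop_coordinate_image_box:
  assumes "\<forall>i\<le>k. a i \<le> b i"
  shows "drop_coordinate k ` box (Suc k) a b = box k a b"
proof (intro set_eqI iffI)
  fix y assume "y \<in> drop_coordinate k ` box (Suc k) a b"
  then show "y \<in> box k a b" unfolding box_def drop_coordinate_def by (auto simp: le_Suc_eq)
next
  fix y assume y: "y \<in> box k a b"
  then have "y(k := a k) \<in> box (Suc k) a b" using assms unfolding box_def by (auto simp: less_Suc_eq)
  moreover have "drop_coordinate k (y(k := a k)) = y"
    using y unfolding box_def drop_coordinate_def by (auto simp: fun_eq_iff)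
  ultimately show "y \<in> drop_coordinate k ` box (Suc k) a b" by (metis image_eqI)
qed

lemma is_box_drop_coordinate_image:
  assumes "is_box (Suc k) B"
  shows "is_box k (drop_coordinate k ` B)"
proof -
  obtain a b where ab: "\<forall>i<Suc k. a i \<le> b i" "B = box (Suc k) a b"
    using assms unfolding is_box_def by blast
  then have "drop_coordinate k ` B = box k a b" by (simp add: drop_coordinate_image_box)
  then show ?thesis using ab(1) unfolding is_box_def by (intro exI[of _ a] exI[of _ b]) auto
qed

lemma tau_crossing_le_tau_drop_coordinate_image:
  assumes "\<forall>B\<in>C. is_box (Suc k) B \<and> box_lo k B \<le> c \<and> c \<le> box_hi k B"
  shows "tau C \<le> tau ((`) (drop_coordinate k) ` C)"
proof (rule tau_le_tau_image[where g = "\<lambda>y. y(k := c)"])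
  fix B x assume "B \<in> C" "x \<in> B"
  then show "(drop_coordinate k x)(k := c) \<in> B"
    using assms unfolding drop_coordinate_def by (auto simp: mem_box_iff less_Suc_eq)
qed

lemma tau_crossing_le_f_box:
  assumes "0 < e" and boxes: "\<forall>B\<in>F. is_box (Suc e) B" and "nu F \<le> enat m"
  shows "ereal_of_enat (tau {B\<in>F. box_lo e B \<le> c \<and> c \<le> box_hi e B}) \<le> f_box m e"
proof -
  define C where "C = {B\<in>F. box_lo e B \<le> c \<and> c \<le> box_hi e B}"
  define H where "H = (`) (drop_coordinate e) ` C"
  have "tau C \<le> tau H"
    using boxes unfolding C_def H_def by (intro tau_crossing_le_tau_drop_coordinate_image) auto
  then have "ereal_of_enat (tau C) \<le> ereal_of_enat (tau H)" by simp
  also have "\<dots> \<le> f_box m e"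
  proof (rule tau_le_f_box_of_nu_le[OF \<open>0 < e\<close>])
    show "\<forall>B\<in>H. is_box e B"
      using boxes is_box_drop_coordinate_image unfolding C_def H_def by auto
    have "nu H \<le> nu C" unfolding H_def by (rule nu_image_le)
    also have "\<dots> \<le> nu F" unfolding C_def by (rule nu_mono) auto
    finally show "nu H \<le> enat m" using assms(3) by simp
  qed
  finally show ?thesis unfolding C_def .
qed

lemma nu_left_le_of_nu_left_le_below:
  fixes hi :: "(nat \<Rightarrow> real) set \<Rightarrow> real"
  assumes "\<And>c'. c' < c \<Longrightarrow> nu {B\<in>F. hi B < c'} \<le> enat h"
  shows "nu {B\<in>F. hi B < c} \<le> enat h"
  unfolding nu_le_iff
proof (intro allI impI)
  fix R assume R: "R \<subseteq> {B\<in>F. hi B < c} \<and> finite R \<and> disjoint R"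
  show "card R \<le> h"
  proof (cases "R = {}")
    case False
    define c' where "c' = (Max (hi ` R) + c) / 2"
    have "Max (hi ` R) < c" using R False by auto
    then have "Max (hi ` R) < c'" "c' < c" unfolding c'_def by auto
    have "R \<subseteq> {B\<in>F. hi B < c'}"
    proof
      fix B assume "B \<in> R"
      then have "hi B \<le> Max (hi ` R)" using R by simp
      then have "hi B < c'" using \<open>Max (hi ` R) < c'\<close> by linarith
      then show "B \<in> {B\<in>F. hi B < c'}" using \<open>B \<in> R\<close> R by auto
    qed
    then show ?thesis using R assms[OF \<open>c' < c\<close>] by (intro card_le_of_nu_le) auto
  qed simp
qed

lemma nu_right_le_of_nu_right_le_above:
  fixes lo :: "(nat \<Rightarrow> real) set \<Rightarrow> real"
  assumes "\<And>c'. c < c' \<Longrightarrow> nu {B\<in>F. c' < lo B} \<le> enat h"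
  shows "nu {B\<in>F. c < lo B} \<le> enat h"
  using nu_left_le_of_nu_left_le_below[of "- c" F "\<lambda>B. - lo B" h] assms[of "- _"]
  by (simp add: neg_less_iff_less minus_less_iff)

context
  fixes F :: "(nat \<Rightarrow> real) set set" and lo hi :: "(nat \<Rightarrow> real) set \<Rightarrow> real" and h :: nat
  assumes separated: "\<And>A B. A \<in> F \<Longrightarrow> B \<in> F \<Longrightarrow> hi A < lo B \<Longrightarrow> A \<inter> B = {}"
    and nonempty: "{} \<notin> F"
    and nu_le: "nu F \<le> enat (2 * h + 1)"
begin

private lemma card_add_le_if_separated:
  assumes R: "R \<subseteq> F" "finite R" "disjoint R" "\<forall>A\<in>R. hi A < c"
    and R': "R' \<subseteq> F" "finite R'" "disjoint R'" "\<forall>B\<in>R'. c < lo B"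
  shows "card R + card R' \<le> 2 * h + 1"
proof -
  have disj: "A \<inter> B = {}" if "A \<in> R" "B \<in> R'" for A B
  proof -
    from that R(4) R'(4) have "hi A < c" "c < lo B" by auto
    then show ?thesis using that R(1) R'(1) by (intro separated) auto
  qed
  then have "\<Union>R \<inter> \<Union>R' = {}" by blast
  moreover have "R \<inter> R' = {}"
  proof (rule equals0I)
    fix B assume "B \<in> R \<inter> R'"
    then have "B = {}" "B \<in> F" using disj R(1) by auto
    then show False using nonempty by simp
  qed
  ultimately have "card (R \<union> R') = card R + card R'" "disjoint (R \<union> R')"
    using R R' by (simp_all add: card_Un_disjoint disjoint_union)
  moreover have "card (R \<union> R') \<le> 2 * h + 1"
    using R R' calculation(2) by (intro card_le_of_nu_le[OF nu_le]) auto
  ultimately show ?thesis by simp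
qed

private lemma nu_right_le_if_left_large:
  assumes "\<not> nu {B\<in>F. hi B < c} \<le> enat h"
  shows "nu {B\<in>F. c < lo B} \<le> enat h"
proof -
  obtain R where R: "R \<subseteq> {B\<in>F. hi B < c}" "finite R" "disjoint R" "h < card R"
    using assms unfolding nu_le_iff by auto
  show ?thesis
    unfolding nu_le_iff
  proof (intro allI impI)
    fix R' assume "R' \<subseteq> {B\<in>F. c < lo B} \<and> finite R' \<and> disjoint R'"
    then have "card R + card R' \<le> 2 * h + 1"
      using R by (intro card_add_le_if_separated[of R c R']) auto
    then show "card R' \<le> h" using R(4) by simp
  qed
qed

private lemma small_left_cuts_nonempty_bdd_above:
  assumes "\<not> nu F \<le> enat h"
  defines "S \<equiv> {c. nu {B\<in>F. hi B < c} \<le> enat h}"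
  shows "S \<noteq> {}" "bdd_above S"
proof -
  obtain R0 where R0: "R0 \<subseteq> F" "finite R0" "disjoint R0" "h < card R0"
    using assms(1) unfolding nu_le_iff by auto
  have "Min (lo ` R0) - 1 \<in> S"
  proof (rule ccontr)
    assume "Min (lo ` R0) - 1 \<notin> S"
    then have "nu {B\<in>F. Min (lo ` R0) - 1 < lo B} \<le> enat h"
      unfolding S_def by (intro nu_right_le_if_left_large) simp
    moreover have "R0 \<subseteq> {B\<in>F. Min (lo ` R0) - 1 < lo B}"
    proof
      fix B assume "B \<in> R0"
      then have "Min (lo ` R0) \<le> lo B" using R0(2) by simp
      then show "B \<in> {B\<in>F. Min (lo ` R0) - 1 < lo B}" using \<open>B \<in> R0\<close> R0(1) by auto
    qed
    ultimately have "card R0 \<le> h" using R0 by (intro card_le_of_nu_le) auto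
    then show False using R0(4) by simp
  qed
  then show "S \<noteq> {}" by blast
  show "bdd_above S"
  proof (rule bdd_aboveI)
    fix c assume "c \<in> S"
    show "c \<le> Max (hi ` R0)"
    proof (rule ccontr)
      assume "\<not> c \<le> Max (hi ` R0)"
      have "R0 \<subseteq> {B\<in>F. hi B < c}"
      proof
        fix B assume "B \<in> R0"
        then have "hi B \<le> Max (hi ` R0)" using R0(2) by simp
        then have "hi B < c" using \<open>\<not> c \<le> Max (hi ` R0)\<close> by linarith
        then show "B \<in> {B\<in>F. hi B < c}" using \<open>B \<in> R0\<close> R0(1) by auto
      qed
      then have "card R0 \<le> h" using \<open>c \<in> S\<close> R0 unfolding S_def by (intro card_le_of_nu_le) auto
      then show False using R0(4) by simp
    qed
  qed
qed

lemma exists_balanced_cut: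
  obtains c where "nu {B\<in>F. hi B < c} \<le> enat h" "nu {B\<in>F. c < lo B} \<le> enat h"
proof (cases "nu F \<le> enat h")
  case True
  then show thesis using order_trans[OF nu_mono True] by (intro that[of 0]) auto
next
  case False
  define S where "S = {c. nu {B\<in>F. hi B < c} \<le> enat h}"
  have "S \<noteq> {}" "bdd_above S"
    using small_left_cuts_nonempty_bdd_above[OF False] unfolding S_def by auto
  have below_Sup: "nu {B\<in>F. hi B < c} \<le> enat h" if less_Sup: "c < Sup S" for c
  proof -
    obtain s where "s \<in> S" "c < s"
      using less_Sup by (auto simp: less_cSup_iff[OF \<open>S \<noteq> {}\<close> \<open>bdd_above S\<close>])
    then have "nu {B\<in>F. hi B < c} \<le> nu {B\<in>F. hi B < s}" by (intro nu_mono) auto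
    also have "\<dots> \<le> enat h" using \<open>s \<in> S\<close> unfolding S_def by simp
    finally show ?thesis .
  qed
  have above_Sup: "nu {B\<in>F. c < lo B} \<le> enat h" if "Sup S < c" for c
  proof (rule nu_right_le_if_left_large)
    show "\<not> nu {B\<in>F. hi B < c} \<le> enat h"
    proof
      assume "nu {B\<in>F. hi B < c} \<le> enat h"
      then have "c \<le> Sup S" by (intro cSup_upper[OF _ \<open>bdd_above S\<close>]) (simp add: S_def)
      with \<open>Sup S < c\<close> show False by simp
    qed
  qed
  show thesis
  proof (rule that[of "Sup S"])
    show "nu {B\<in>F. hi B < Sup S} \<le> enat h"
      using below_Sup by (rule nu_left_le_of_nu_left_le_below)
    show "nu {B\<in>F. Sup S < lo B} \<le> enat h"
      using above_Sup by (rule nu_right_le_of_nu_right_le_above)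
  qed
qed

end

lemma tau_le_by_cut:
  assumes "0 < e" and boxes: "\<forall>B\<in>F. is_box (Suc e) B"
    and "nu F \<le> enat m" "m \<le> 2 * h + 1"
    and halves: "\<And>G. G \<subseteq> F \<Longrightarrow> nu G \<le> enat h \<Longrightarrow> ereal_of_enat (tau G) \<le> t"
  shows "ereal_of_enat (tau F) \<le> t + t + f_box m e"
proof -
  have "A \<inter> B = {}" if "A \<in> F" "B \<in> F" "box_hi e A < box_lo e B" for A B
    using that boxes box_lo_le_coordinate[of "Suc e" B _ e] coordinate_le_box_hi[of "Suc e" A _ e]
    by (force simp: not_le)
  moreover have "{} \<notin> F" using boxes box_nonempty by blast
  moreover have "nu F \<le> enat (2 * h + 1)" using assms(3,4) by (simp add: order_trans)
  ultimately obtain c where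
    left: "nu {B\<in>F. box_hi e B < c} \<le> enat h" and right: "nu {B\<in>F. c < box_lo e B} \<le> enat h"
    by (rule exists_balanced_cut)
  define A where "A = {B\<in>F. box_hi e B < c}"
  define U where "U = {B\<in>F. c < box_lo e B}"
  define C where "C = {B\<in>F. box_lo e B \<le> c \<and> c \<le> box_hi e B}"
  have "F = A \<union> U \<union> C" unfolding A_def U_def C_def by force
  then have "tau F \<le> tau (A \<union> U) + tau C" using tau_Un_le[of "A \<union> U" C] by simp
  also have "\<dots> \<le> tau A + tau U + tau C" by (intro add_right_mono tau_Un_le)
  finally have "ereal_of_enat (tau F) \<le> ereal_of_enat (tau A) + ereal_of_enat (tau U) + ereal_of_enat (tau C)"
    by (simp flip: ereal_of_enat_add)
  also have "\<dots> \<le> t + t + f_box m e"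
  proof (intro add_mono)
    show "ereal_of_enat (tau A) \<le> t" "ereal_of_enat (tau U) \<le> t"
      using halves left right unfolding A_def U_def by auto
    show "ereal_of_enat (tau C) \<le> f_box m e"
      unfolding C_def by (rule tau_crossing_le_f_box[OF \<open>0 < e\<close> boxes assms(3)])
  qed
  finally show ?thesis .
qed

section \<open>The recursive bound\<close>

lemma log_recursion_step:
  fixes h m :: nat and rh r :: real
  assumes "1 \<le> h" "2 * h \<le> m" "0 \<le> rh" "2 * rh \<le> r"
  shows "2 * (h + log 2 h * rh) + r \<le> m + log 2 m * r"
proof -
  have "1 + log 2 h = log 2 (2 * h)" using assms(1) by (simp add: log_mult)
  also have "\<dots> \<le> log 2 m" using assms(1,2) by simp
  finally have "log 2 h \<le> log 2 m - 1" by simp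
  have "2 * (log 2 h * rh) = log 2 h * (2 * rh)" by simp
  also have "\<dots> \<le> log 2 h * r" using assms(1,4) by (intro mult_left_mono) auto
  also have "\<dots> \<le> (log 2 m - 1) * r"
    using \<open>log 2 h \<le> log 2 m - 1\<close> assms(3,4) by (intro mult_right_mono) auto
  finally show ?thesis using assms(2) by (simp add: algebra_simps)
qed

lemma tau_le_log_bound:
  assumes "0 < e" "1 \<le> m" "\<forall>B\<in>F. is_box (Suc e) B" "nu F \<le> enat m"
  shows "ereal_of_enat (tau F) \<le> ereal m + ereal (log 2 m) * f_box m e"
  using assms(2-)
proof (induction m arbitrary: F rule: less_induct)
  case (less m)
  consider "m = 1" | "2 \<le> m" "f_box m e = \<infinity>" | r where "2 \<le> m" "f_box m e = ereal r"
    using less.prems(1) f_box_nonneg[OF assms(1), of m] by (cases "f_box m e") force+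
  then show ?case
  proof cases
    case 1 \<comment> \<open>the bound is \<open>1\<close> even if \<open>f_box 1 e = \<infinity>\<close>, as \<open>0 * \<infinity> = 0\<close> in \<open>ereal\<close>\<close>
    then have "tau F \<le> enat 1" using less.prems by (intro tau_le_1_if_nu_le_1) auto
    then have "ereal_of_enat (tau F) \<le> ereal_of_enat (enat 1)" by (simp only: ereal_of_enat_le_iff)
    then show ?thesis using 1 by (simp flip: zero_ereal_def)
  next
    case 2
    then have "0 < log 2 m" by simp
    then have "ereal (log 2 m) * f_box m e = \<infinity>" unfolding 2(2) by simp
    then show ?thesis by (simp only:) simp
  next
    case (3 r)
    define h where "h = m div 2"
    have h: "1 \<le> h" "h < m" "2 * h \<le> m" "m \<le> 2 * h + 1" using 3(1) unfolding h_def by auto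
    obtain rh where rh: "f_box h e = ereal rh" "0 \<le> rh" "2 * rh \<le> r"
      using f_box_double_le[OF assms(1) h(3)] f_box_nonneg[OF assms(1), of h] 3(2)
      by (cases "f_box h e") auto
    have "ereal_of_enat (tau F) \<le>
        ereal (h + log 2 h * rh) + ereal (h + log 2 h * rh) + f_box m e"
    proof (rule tau_le_by_cut[OF assms(1) less.prems(2,3) h(4)])
      fix G assume "G \<subseteq> F" "nu G \<le> enat h"
      then show "ereal_of_enat (tau G) \<le> ereal (h + log 2 h * rh)"
        using less.IH[OF h(2) h(1), of G] less.prems(2) rh(1) by auto
    qed
    also have "\<dots> \<le> ereal m + ereal (log 2 m) * f_box m e"
      using log_recursion_step[OF h(1,3) rh(2,3)] 3(2) by (simp add: mult.commute)
    finally show ?thesis .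
  qed
qed

theorem lemma1:
  fixes n d :: nat
  assumes "n \<ge> 1" and "d \<ge> 2"
  shows "f_box n d \<le> ereal (real n) + ereal (log 2 (real n)) * f_box n (d - 1)"
  unfolding f_box_eq_SUP[of n d]
proof (rule SUP_least)
  fix F assume "F \<in> {F. (\<forall>B\<in>F. is_box d B) \<and> nu F = enat n}"
  moreover have "Suc (d - 1) = d" using assms(2) by simp
  ultimately show "ereal_of_enat (tau F) \<le> ereal n + ereal (log 2 n) * f_box n (d - 1)"
    using tau_le_log_bound[of "d - 1" n F] assms by auto
qed

end
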